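(* Let $\bm\sigma=\sigma_1\bm e_1+\dots+\sigma_r\bm e_r\in\mathbb{Z}^r$ be a changemaker vector with non-trivial stable coefficients ($\sigma_r\ge2$) such that $L=\langle\bm\sigma\rangle^\perp\subseteq\mathbb{Z}^r$ admits an obtuse superbase. Suppose that for some $k$ the coefficients satisfy $\sigma_k=\sigma_{k+1}=\sigma_{k+2}=\sigma_{k+3}$. If $\bm z=\sum z_i\bm e_i\in L$ is an irreducible vector with $z_k=z_{k+1}$ and $z_{k+2}=z_{k+3}$, then $z_{k+2}=z_{k+1}$.
   Context: $\mathbb{Z}^r$ has the standard pairing. A changemaker vector is $\bm\sigma=\sum\sigma_i\bm e_i$ with $\sigma_1=1$ and $\sigma_{i-1}\le\sigma_i\le1+\sigma_1+\dots+\sigma_{i-1}$. An obtuse superbase of a rank-$k$ lattice is a spanning set $\{v_0,\dots,v_k\}$ with $v_i\cdot v_j\le0$ for $i\ne j$ and $\sum v_i=0$. A non-zero $v\in L$ is irreducible if whenever $v=x+y$ with $x,y\in L$ non-zero, $x\cdot y\le -1$. *)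

theory Defs
  imports Main
begin

text \<open>Vectors of Z^r are modelled as functions nat => int supported on {1..r};
  the i-th coordinate of z is z i, for 1 <= i <= r.\<close>

definition zvec :: "nat \<Rightarrow> (nat \<Rightarrow> int) set" where
  "zvec r = {z. \<forall>i. i \<notin> {1..r} \<longrightarrow> z i = 0}"

definition pairing :: "nat \<Rightarrow> (nat \<Rightarrow> int) \<Rightarrow> (nat \<Rightarrow> int) \<Rightarrow> int" where
  "pairing r x y = (\<Sum>i=1..r. x i * y i)"

definition changemaker :: "nat \<Rightarrow> (nat \<Rightarrow> int) \<Rightarrow> bool" where
  "changemaker r \<sigma> \<longleftrightarrow> r \<ge> 1 \<and> \<sigma> \<in> zvec r \<and> \<sigma> 1 = 1 \<and>
     (\<forall>i. 2 \<le> i \<and> i \<le> r \<longrightarrow> \<sigma> (i - 1) \<le> \<sigma> i \<and> \<sigma> i \<le> 1 + (\<Sum>j=1..i-1. \<sigma> j))"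

definition orth_lattice :: "nat \<Rightarrow> (nat \<Rightarrow> int) \<Rightarrow> (nat \<Rightarrow> int) set" where
  "orth_lattice r \<sigma> = {z \<in> zvec r. pairing r z \<sigma> = 0}"

definition obtuse_superbase ::
  "nat \<Rightarrow> (nat \<Rightarrow> int) set \<Rightarrow> nat \<Rightarrow> (nat \<Rightarrow> nat \<Rightarrow> int) \<Rightarrow> bool" where
  "obtuse_superbase r L k v \<longleftrightarrow>
     (\<forall>i\<le>k. v i \<in> L) \<and>
     (\<forall>z\<in>L. \<exists>c :: nat \<Rightarrow> int. z = (\<lambda>j. \<Sum>i\<le>k. c i * v i j)) \<and>
     (\<forall>i\<le>k. \<forall>j\<le>k. i \<noteq> j \<longrightarrow> pairing r (v i) (v j) \<le> 0) \<and>
     (\<lambda>j. \<Sum>i\<le>k. v i j) = (\<lambda>j. 0)"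

definition irreducible_vec :: "nat \<Rightarrow> (nat \<Rightarrow> int) set \<Rightarrow> (nat \<Rightarrow> int) \<Rightarrow> bool" where
  "irreducible_vec r L v \<longleftrightarrow> v \<in> L \<and> v \<noteq> (\<lambda>j. 0) \<and>
     (\<forall>x\<in>L. \<forall>y\<in>L. x \<noteq> (\<lambda>j. 0) \<and> y \<noteq> (\<lambda>j. 0) \<and> v = (\<lambda>j. x j + y j)
        \<longrightarrow> pairing r x y \<le> -1)"

end

theory Submission
  imports Defs
begin

text \<open>An obtuse superbase v_0, ..., v_n of L makes L the lattice of a weighted graph on
  {0..n}: with weights w(a,b) = - v_a . v_b >= 0 and v_0 + ... + v_n = 0, the vectors
  x = sum c_i v_i and y = sum d_i v_i satisfy 2 x . y = sum_(a,b) w(a,b) (c_a - c_b) (d_a - d_b).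
  Peeling off level sets shows that every irreducible vector is a cut sum_(i in X) v_i with X
  connected. As no sigma_i vanishes, L has no vectors of norm 1. Hence a vector of norm 2 jumps
  by at most 1 across every edge, all its jumps lie on a single level, and if it is orthogonal
  to an irreducible cut then no edge is crossed by both.

  The roots alpha = e_(k+1) - e_k, rho = e_(k+3) - e_(k+2) and beta = e_(k+2) - e_k lie in L,
  and z is orthogonal to alpha and rho. Since alpha + rho has norm 4, its jumps are at most 1
  as well, and the jumps Z, A, P, B of z, alpha, rho, beta across any edge satisfy
  |Z B| + |A B| + |P B| + A P <= B^2. Summing over the edges, with alpha . beta = 1,
  rho . beta = -1, alpha . rho = 0 and beta . beta = 2, gives 2 |z . beta| + 4 <= 4,
  i.e. z_(k+2) = z_k.\<close>

definition lincomb :: "nat \<Rightarrow> (nat \<Rightarrow> nat \<Rightarrow> int) \<Rightarrow> (nat \<Rightarrow> int) \<Rightarrow> nat \<Rightarrow> int" where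
  "lincomb n v c = (\<lambda>j. \<Sum>i\<le>n. c i * v i j)"

lemma pairing_sym: "pairing r x y = pairing r y x"
  unfolding pairing_def by (simp add: mult.commute)

lemma pairing_add_left: "pairing r (\<lambda>j. x j + y j) w = pairing r x w + pairing r y w"
  unfolding pairing_def by (simp add: distrib_right sum.distrib)

lemma pairing_add_right: "pairing r w (\<lambda>j. x j + y j) = pairing r w x + pairing r w y"
  unfolding pairing_def by (simp add: distrib_left sum.distrib)

lemma pairing_sum_right: "pairing r x (\<lambda>j. \<Sum>b\<in>B. f b j) = (\<Sum>b\<in>B. pairing r x (f b))"
  unfolding pairing_def by (simp add: sum_distrib_left sum.swap[of _ B])

lemma pairing_lincomb_lincomb:
  "pairing r (lincomb n v c) (lincomb n v d) =
     (\<Sum>a\<le>n. \<Sum>b\<le>n. c a * d b * pairing r (v a) (v b))"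
proof -
  have "pairing r (lincomb n v c) (lincomb n v d) =
      (\<Sum>j=1..r. \<Sum>a\<le>n. \<Sum>b\<le>n. (c a * v a j) * (d b * v b j))"
    unfolding pairing_def lincomb_def by (simp add: sum_product)
  also have "\<dots> = (\<Sum>a\<le>n. \<Sum>j=1..r. \<Sum>b\<le>n. (c a * v a j) * (d b * v b j))"
    by (rule sum.swap)
  also have "\<dots> = (\<Sum>a\<le>n. \<Sum>b\<le>n. \<Sum>j=1..r. (c a * v a j) * (d b * v b j))"
    by (intro sum.cong refl sum.swap)
  also have "\<dots> = (\<Sum>a\<le>n. \<Sum>b\<le>n. c a * d b * pairing r (v a) (v b))"
    unfolding pairing_def by (intro sum.cong refl) (simp add: sum_distrib_left algebra_simps)
  finally show ?thesis .
qed

lemma lincomb_add: "lincomb n v (\<lambda>i. c i + d i) = (\<lambda>j. lincomb n v c j + lincomb n v d j)"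
  unfolding lincomb_def by (simp add: distrib_right sum.distrib)

lemma lincomb_zero: "(\<And>i. i \<le> n \<Longrightarrow> c i = 0) \<Longrightarrow> lincomb n v c = (\<lambda>j. 0)"
  unfolding lincomb_def by simp

lemma irreducible_vec_split:
  assumes "irreducible_vec r L z" "x \<in> L" "y \<in> L" "z = (\<lambda>j. x j + y j)" "0 \<le> pairing r x y"
  shows "x = (\<lambda>j. 0) \<or> y = (\<lambda>j. 0)"
  using assms unfolding irreducible_vec_def by force

lemma level_jump_sq_le_abs:
  fixes t x y :: int
  shows "(of_bool (t \<le> x) - of_bool (t \<le> y))\<^sup>2 \<le> \<bar>x - y\<bar>"
  by (cases "t \<le> x"; cases "t \<le> y") auto

lemma two_level_jumps_sq_le_abs:
  fixes t x y :: int
  shows "(of_bool (t \<le> x) - of_bool (t \<le> y))\<^sup>2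
    + (of_bool (t - 1 \<le> x) - of_bool (t - 1 \<le> y))\<^sup>2 \<le> \<bar>x - y\<bar>"
  by (cases "t \<le> x"; cases "t \<le> y"; cases "t - 1 \<le> x"; cases "t - 1 \<le> y") auto

lemma abs_le_square_int: "\<bar>x :: int\<bar> \<le> x\<^sup>2"
proof (cases "x = 0")
  case False
  then have "\<bar>x\<bar> * 1 \<le> \<bar>x\<bar> * \<bar>x\<bar>"
    by (intro mult_left_mono) auto
  then show ?thesis
    by (simp add: power2_eq_square abs_mult_self_eq)
qed simp

lemma root_triple_edge_bound:
  fixes Z A P B :: int
  assumes "\<bar>Z\<bar> \<le> 1" "\<bar>A\<bar> \<le> 1" "\<bar>P\<bar> \<le> 1" "\<bar>B\<bar> \<le> 1" "\<bar>A + P\<bar> \<le> 1"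
    and "Z * A = 0" "Z * P = 0"
  shows "\<bar>Z * B\<bar> + \<bar>A * B\<bar> + \<bar>P * B\<bar> + A * P \<le> B\<^sup>2"
proof -
  have "Z \<in> {-1, 0, 1}" "A \<in> {-1, 0, 1}" "P \<in> {-1, 0, 1}" "B \<in> {-1, 0, 1}"
    using assms(1-4) by (simp_all add: abs_le_iff, linarith+)
  then show ?thesis
    using assms(5-7) by (simp_all, elim disjE) (simp_all add: power2_eq_square)
qed

locale obtuse_superbase_lattice =
  fixes r :: nat and L :: "(nat \<Rightarrow> int) set" and n :: nat and v :: "nat \<Rightarrow> nat \<Rightarrow> int"
  assumes superbase: "obtuse_superbase r L n v"
    and lincomb_mem: "lincomb n v c \<in> L"
begin

lemma superbase_sum: "(\<Sum>i\<le>n. v i j) = 0"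
  using superbase unfolding obtuse_superbase_def by (simp add: fun_eq_iff)

lemma superbase_spans: "x \<in> L \<Longrightarrow> \<exists>c. x = lincomb n v c"
  using superbase unfolding obtuse_superbase_def lincomb_def by blast

lemma lincomb_add_const: "lincomb n v (\<lambda>i. c i + t) = lincomb n v c"
  unfolding lincomb_def by (simp add: distrib_right sum.distrib flip: sum_distrib_left add: superbase_sum)

definition weight :: "nat \<Rightarrow> nat \<Rightarrow> int" where
  "weight a b = - pairing r (v a) (v b)"

definition edge :: "nat \<Rightarrow> nat \<Rightarrow> bool" where
  "edge a b \<longleftrightarrow> a \<le> n \<and> b \<le> n \<and> 0 < weight a b"

text \<open>Every edge is counted once in each orientation; this is where the factors 2 come from.\<close>

definition edge_sum :: "(nat \<Rightarrow> nat \<Rightarrow> int) \<Rightarrow> int" where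
  "edge_sum f = (\<Sum>(a, b) \<in> {(a, b). edge a b}. weight a b * f a b)"

definition cut_vec :: "nat set \<Rightarrow> nat \<Rightarrow> int" where
  "cut_vec X = lincomb n v (\<lambda>i. of_bool (i \<in> X))"

lemma weight_sym: "weight a b = weight b a"
  unfolding weight_def by (simp add: pairing_sym)

lemma weight_nonneg: "a \<le> n \<Longrightarrow> b \<le> n \<Longrightarrow> a \<noteq> b \<Longrightarrow> 0 \<le> weight a b"
  using superbase unfolding obtuse_superbase_def weight_def by auto

lemma edge_sym: "edge a b \<longleftrightarrow> edge b a"
  unfolding edge_def by (auto simp: weight_sym)

lemma edge_weight_ge_1: "edge a b \<Longrightarrow> 1 \<le> weight a b"
  unfolding edge_def by simp

lemma edge_neq: "edge a b \<Longrightarrow> a \<noteq> b"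
  using sum_nonneg[of "{1..r}" "\<lambda>i. v a i * v a i"] by (auto simp: edge_def weight_def pairing_def)

lemma finite_edges: "finite {(a, b). edge a b}"
  by (rule finite_subset[of _ "{..n} \<times> {..n}"]) (auto simp: edge_def)

lemma edge_sum_cong: "(\<And>a b. edge a b \<Longrightarrow> f a b = g a b) \<Longrightarrow> edge_sum f = edge_sum g"
  unfolding edge_sum_def by (intro sum.cong) auto

lemma edge_sum_distrib: "edge_sum (\<lambda>a b. f a b + g a b) = edge_sum f + edge_sum g"
  unfolding edge_sum_def by (simp add: distrib_left sum.distrib split_def)

lemma edge_sum_subtractf: "edge_sum (\<lambda>a b. f a b - g a b) = edge_sum f - edge_sum g"
  unfolding edge_sum_def by (simp add: right_diff_distrib sum_subtractf split_def)

lemma edge_sum_mono: "(\<And>a b. edge a b \<Longrightarrow> f a b \<le> g a b) \<Longrightarrow> edge_sum f \<le> edge_sum g"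
  unfolding edge_sum_def by (intro sum_mono) (auto simp: edge_def intro!: mult_left_mono)

lemma edge_sum_nonneg: "(\<And>a b. edge a b \<Longrightarrow> 0 \<le> f a b) \<Longrightarrow> 0 \<le> edge_sum f"
  using edge_sum_mono[of "\<lambda>a b. 0" f] by (simp add: edge_sum_def)

lemma edge_sum_abs: "\<bar>edge_sum f\<bar> \<le> edge_sum (\<lambda>a b. \<bar>f a b\<bar>)"
proof -
  have "\<bar>edge_sum f\<bar> \<le> (\<Sum>(a, b) \<in> {(a, b). edge a b}. \<bar>weight a b * f a b\<bar>)"
    unfolding edge_sum_def split_def by (rule sum_abs)
  also have "\<dots> = edge_sum (\<lambda>a b. \<bar>f a b\<bar>)"
    unfolding edge_sum_def by (intro sum.cong) (auto simp: abs_mult edge_def)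
  finally show ?thesis .
qed

lemma edge_sum_edge_le:
  assumes "edge i j" and nonneg: "\<And>a b. edge a b \<Longrightarrow> 0 \<le> f a b"
  shows "weight i j * (f i j + f j i) \<le> edge_sum f"
proof -
  have "{(i, j), (j, i)} \<subseteq> {(a, b). edge a b}"
    using assms(1) edge_sym by auto
  moreover have "0 \<le> weight a b * f a b" if "edge a b" for a b
    using that nonneg[OF that] by (simp add: edge_def)
  ultimately have "(\<Sum>(a, b) \<in> {(i, j), (j, i)}. weight a b * f a b) \<le> edge_sum f"
    unfolding edge_sum_def using finite_edges by (intro sum_mono2) auto
  then show ?thesis
    using edge_neq[OF assms(1)] by (simp add: weight_sym[of j i] distrib_left)
qed

lemma edge_sum_negf: "edge_sum (\<lambda>a b. - f a b) = - edge_sum f"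
  unfolding edge_sum_def by (simp add: sum_negf split_def)

lemma edge_sum_nonneg_eq_0:
  assumes "edge_sum f = 0" "edge a b" and nonneg: "\<And>a b. edge a b \<Longrightarrow> 0 \<le> f a b"
  shows "f a b = 0"
proof (rule ccontr)
  assume "f a b \<noteq> 0"
  moreover have "0 \<le> f a b" "0 \<le> f b a"
    using nonneg assms(2) edge_sym by auto
  ultimately have "0 < f a b + f b a"
    by linarith
  then have "0 < weight a b * (f a b + f b a)"
    using edge_weight_ge_1[OF assms(2)] by simp
  then show False
    using edge_sum_edge_le[where f = f, OF assms(2) nonneg] assms(1) by simp
qed

lemma edge_sum_zero_has_pos:
  assumes "edge_sum f = 0" "edge a b" "f a b \<noteq> 0"
  obtains c d where "edge c d" "0 < f c d"
proof -
  have "\<exists>c d. edge c d \<and> 0 < f c d"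
  proof (rule ccontr)
    assume "\<nexists>c d. edge c d \<and> 0 < f c d"
    then have "- f a b = 0"
      using edge_sum_nonneg_eq_0[of "\<lambda>c d. - f c d"] assms(1,2) by (force simp: edge_sum_negf)
    then show False
      using assms(3) by simp
  qed
  then show thesis
    using that by blast
qed

lemma edge_sum_eq_double_sum:
  assumes "\<And>a. f a a = 0"
  shows "edge_sum f = (\<Sum>a\<le>n. \<Sum>b\<le>n. weight a b * f a b)"
proof -
  have "edge_sum f = (\<Sum>(a, b) \<in> {..n} \<times> {..n}. weight a b * f a b)"
    unfolding edge_sum_def
  proof (intro sum.mono_neutral_left ballI)
    fix p assume "p \<in> {..n} \<times> {..n} - {(a, b). edge a b}"
    with assms weight_nonneg show "(case p of (a, b) \<Rightarrow> weight a b * f a b) = 0"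
      by (cases p) (fastforce simp: edge_def)
  qed (auto simp: edge_def)
  then show ?thesis
    by (simp add: sum.cartesian_product)
qed

lemma edge_sum_diff_mult_eq_pairing:
  "edge_sum (\<lambda>a b. (c a - c b) * (d a - d b)) = 2 * pairing r (lincomb n v c) (lincomb n v d)"
proof -
  define G where "G a b = pairing r (v a) (v b)" for a b
  have G_sym: "G a b = G b a" for a b
    unfolding G_def by (rule pairing_sym)
  have row: "(\<Sum>b\<le>n. G a b) = 0" for a
    unfolding G_def pairing_sum_right[symmetric] superbase_sum by (simp add: pairing_def)
  have col: "(\<Sum>a\<le>n. G a b) = 0" for b
    using row[of b] by (simp add: G_sym)
  have "edge_sum (\<lambda>a b. (c a - c b) * (d a - d b)) =
      (\<Sum>a\<le>n. \<Sum>b\<le>n. c a * d b * G a b) + (\<Sum>a\<le>n. \<Sum>b\<le>n. c b * d a * G a b)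
      - (\<Sum>a\<le>n. c a * d a * (\<Sum>b\<le>n. G a b)) - (\<Sum>a\<le>n. \<Sum>b\<le>n. c b * d b * G a b)"
    by (simp add: edge_sum_eq_double_sum weight_def G_def algebra_simps sum.distrib sum_subtractf
        sum_distrib_left)
  also have "(\<Sum>a\<le>n. \<Sum>b\<le>n. c b * d b * G a b) = (\<Sum>b\<le>n. c b * d b * (\<Sum>a\<le>n. G a b))"
    by (subst sum.swap) (simp add: sum_distrib_left)
  also have "(\<Sum>a\<le>n. \<Sum>b\<le>n. c b * d a * G a b) = (\<Sum>a\<le>n. \<Sum>b\<le>n. c a * d b * G a b)"
    by (subst sum.swap) (simp add: G_sym mult.commute)
  finally show ?thesis
    using pairing_lincomb_lincomb[of r n v c d] by (simp add: row col G_def[symmetric])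
qed

lemma edge_sum_diff_sq_eq_pairing:
  "edge_sum (\<lambda>a b. (c a - c b)\<^sup>2) = 2 * pairing r (lincomb n v c) (lincomb n v c)"
  using edge_sum_diff_mult_eq_pairing[of c c] by (simp add: power2_eq_square)

lemma edge_diff_sq_le_norm:
  assumes "edge a b"
  shows "(c a - c b)\<^sup>2 \<le> pairing r (lincomb n v c) (lincomb n v c)"
proof -
  have "weight a b * ((c a - c b)\<^sup>2 + (c b - c a)\<^sup>2) \<le> edge_sum (\<lambda>a b. (c a - c b)\<^sup>2)"
    by (rule edge_sum_edge_le[OF assms]) simp
  then have "weight a b * (2 * (c a - c b)\<^sup>2) \<le> 2 * pairing r (lincomb n v c) (lincomb n v c)"
    by (simp only: edge_sum_diff_sq_eq_pairing power2_commute[of "c b" "c a"] mult_2)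
  moreover have "1 * (2 * (c a - c b)\<^sup>2) \<le> weight a b * (2 * (c a - c b)\<^sup>2)"
    using edge_weight_ge_1[OF assms] by (intro mult_right_mono) auto
  ultimately show ?thesis
    by linarith
qed

lemma edge_diff_le_1_if_norm_2:
  assumes "pairing r (lincomb n v c) (lincomb n v c) = 2" "edge a b"
  shows "\<bar>c a - c b\<bar> \<le> 1"
  using edge_diff_sq_le_norm[OF assms(2), of c] assms(1) abs_le_square_iff[of 2 "c a - c b"] by simp

lemma edge_sum_cut_sq_eq_pairing:
  "edge_sum (\<lambda>a b. (of_bool (a \<in> X) - of_bool (b \<in> X))\<^sup>2) = 2 * pairing r (cut_vec X) (cut_vec X)"
  unfolding cut_vec_def by (rule edge_sum_diff_sq_eq_pairing)

lemma cut_norm_ge_1: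
  assumes "edge a b" "(a \<in> X) \<noteq> (b \<in> X)"
  shows "1 \<le> pairing r (cut_vec X) (cut_vec X)"
  using edge_diff_sq_le_norm[OF assms(1), of "\<lambda>i. of_bool (i \<in> X)"] assms(2)
  by (auto simp: cut_vec_def)

lemma cut_vec_nonzero:
  assumes "edge a b" "(a \<in> X) \<noteq> (b \<in> X)"
  shows "cut_vec X \<noteq> (\<lambda>j. 0)"
  using cut_norm_ge_1[OF assms] by (auto simp: pairing_def)

lemma cut_vec_mem: "cut_vec X \<in> L"
  unfolding cut_vec_def by (rule lincomb_mem)

text \<open>Peel off the cut of the level set \<open>{c \<ge> 1}\<close>: it pairs nonnegatively with the rest,
  so by irreducibility one of the two parts vanishes.\<close>

lemma irreducible_nonneg_lincomb_is_cut:
  assumes "\<And>i. i \<le> n \<Longrightarrow> 0 \<le> c i" "irreducible_vec r L (lincomb n v c)"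
  shows "\<exists>X. lincomb n v c = cut_vec X"
  using assms
proof (induction "nat (\<Sum>i\<le>n. c i)" arbitrary: c rule: less_induct)
  case less
  define T where "T = {i. 1 \<le> c i}"
  define d where "d i = c i - of_bool (i \<in> T)" for i
  have split: "lincomb n v c = (\<lambda>j. cut_vec T j + lincomb n v d j)"
    unfolding cut_vec_def lincomb_add[symmetric] d_def by simp
  have "0 \<le> (of_bool (a \<in> T) - of_bool (b \<in> T)) * (d a - d b)" if "edge a b" for a b
    using less.prems(1) that unfolding d_def T_def edge_def
    by (cases "1 \<le> c a"; cases "1 \<le> c b") auto
  then have "0 \<le> edge_sum (\<lambda>a b. (of_bool (a \<in> T) - of_bool (b \<in> T)) * (d a - d b))"
    by (rule edge_sum_nonneg)
  then have "0 \<le> pairing r (cut_vec T) (lincomb n v d)"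
    unfolding cut_vec_def edge_sum_diff_mult_eq_pairing by simp
  then have "cut_vec T = (\<lambda>j. 0) \<or> lincomb n v d = (\<lambda>j. 0)"
    using irreducible_vec_split[OF less.prems(2) cut_vec_mem lincomb_mem split] by blast
  then show ?case
  proof
    assume "lincomb n v d = (\<lambda>j. 0)"
    then show ?case
      using split by auto
  next
    assume "cut_vec T = (\<lambda>j. 0)"
    then have c_eq_d: "lincomb n v c = lincomb n v d"
      using split by simp
    obtain i where i: "i \<le> n" "c i \<noteq> 0"
      using less.prems(2) lincomb_zero unfolding irreducible_vec_def by blast
    have "(\<Sum>i\<le>n. d i) = (\<Sum>i\<le>n. c i) - (\<Sum>i\<le>n. of_bool (i \<in> T))"
      unfolding d_def by (simp add: sum_subtractf)
    moreover have "of_bool (i \<in> T) \<le> (\<Sum>i\<le>n. of_bool (i \<in> T) :: int)"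
      using i(1) by (intro member_le_sum) auto
    moreover have "i \<in> T"
      using i less.prems(1)[of i] by (simp add: T_def)
    moreover have "0 \<le> (\<Sum>i\<le>n. d i)"
      using less.prems(1) by (auto simp: T_def d_def intro!: sum_nonneg)
    ultimately have "nat (\<Sum>i\<le>n. d i) < nat (\<Sum>i\<le>n. c i)"
      by simp
    moreover have "0 \<le> d i" if "i \<le> n" for i
      using less.prems(1)[OF that] by (auto simp: d_def T_def)
    ultimately show ?case
      using less.hyps[of d] less.prems(2) c_eq_d by simp
  qed
qed

lemma irreducible_is_cut:
  assumes "irreducible_vec r L z"
  obtains X where "z = cut_vec X"
proof -
  obtain c where z: "z = lincomb n v c"
    using assms superbase_spans unfolding irreducible_vec_def by blast
  define m where "m = Min (c ` {..n})"
  have "z = lincomb n v (\<lambda>i. c i + - m)"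
    unfolding z by (rule lincomb_add_const[symmetric])
  moreover have "m \<le> c i" if "i \<le> n" for i
    unfolding m_def using that by (intro Min_le) auto
  ultimately obtain X where "z = cut_vec X"
    using irreducible_nonneg_lincomb_is_cut[of "\<lambda>i. c i + - m"] assms by fastforce
  then show ?thesis
    by (rule that)
qed

lemma irreducible_cut_connected:
  assumes "irreducible_vec r L (cut_vec X)" "A \<subseteq> X"
    and "cut_vec A \<noteq> (\<lambda>j. 0)" "cut_vec (X - A) \<noteq> (\<lambda>j. 0)"
  obtains a b where "a \<in> A" "b \<in> X - A" "edge a b"
proof (rule ccontr)
  assume no_edge: "\<not> thesis"
  have "cut_vec X = (\<lambda>j. cut_vec A j + cut_vec (X - A) j)"
    unfolding cut_vec_def lincomb_add[symmetric]
    by (intro arg_cong[where f = "lincomb n v"] ext) (use assms(2) in auto)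
  moreover have "edge_sum (\<lambda>a b. (of_bool (a \<in> A) - of_bool (b \<in> A))
      * (of_bool (a \<in> X - A) - of_bool (b \<in> X - A))) = edge_sum (\<lambda>a b. 0)"
    using no_edge that edge_sym by (intro edge_sum_cong) auto
  then have "pairing r (cut_vec A) (cut_vec (X - A)) = 0"
    unfolding cut_vec_def edge_sum_diff_mult_eq_pairing by (simp add: edge_sum_def)
  ultimately show False
    using irreducible_vec_split[OF assms(1) cut_vec_mem cut_vec_mem, of A "X - A"] assms(3,4)
    by simp
qed

lemma oriented_crossing_edge:
  fixes p :: "nat \<Rightarrow> int"
  assumes "edge a b" "\<bar>p a - p b\<bar> \<le> 1" "0 < (of_bool (a \<in> X) - of_bool (b \<in> X)) * (p a - p b)"
  obtains i j where "edge i j" "p i = p j + 1" "i \<in> X" "j \<notin> X"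
proof -
  have "a \<in> X \<and> b \<notin> X \<and> p a = p b + 1 \<or> b \<in> X \<and> a \<notin> X \<and> p b = p a + 1"
    using assms(2,3) by (cases "a \<in> X"; cases "b \<in> X") (simp_all add: abs_le_iff)
  then show ?thesis
    using that assms(1) edge_sym by blast
qed

text \<open>Orthogonality balances the positive and negative parts of the flow \<open>g\<close>, and the positive
  part is at least 2; so \<open>\<Sum> \<bar>g\<bar> = 4 = \<Sum> (p a - p b)\<^sup>2\<close>, forcing \<open>\<bar>g\<bar> = (p a - p b)\<^sup>2\<close>
  on every edge.\<close>

lemma norm_2_jump_crosses_orthogonal_cut:
  assumes norm: "pairing r (lincomb n v p) (lincomb n v p) = 2"
    and orth: "pairing r (cut_vec X) (lincomb n v p) = 0"
    and ij: "edge i j" "i \<in> X" "j \<notin> X" "p i = p j + 1"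
    and ab: "edge a b" "p a \<noteq> p b"
  shows "(a \<in> X) \<noteq> (b \<in> X)"
proof -
  define g where "g = (\<lambda>a b. (of_bool (a \<in> X) - of_bool (b \<in> X)) * (p a - p b))"
  have g_le: "\<bar>g a b\<bar> \<le> (p a - p b)\<^sup>2" for a b
    using abs_le_square_int[of "p a - p b"] by (auto simp: g_def abs_mult)
  have "edge_sum g = 0"
    using edge_sum_diff_mult_eq_pairing[of "\<lambda>i. of_bool (i \<in> X)" p] orth by (simp add: g_def cut_vec_def)
  moreover have "edge_sum (\<lambda>a b. max (g a b) 0) - edge_sum (\<lambda>a b. max (- g a b) 0) = edge_sum g"
    unfolding edge_sum_subtractf[symmetric] by (rule edge_sum_cong) (simp add: max_def)
  ultimately have "edge_sum (\<lambda>a b. max (g a b) 0) = edge_sum (\<lambda>a b. max (- g a b) 0)"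
    by simp
  moreover have "2 \<le> edge_sum (\<lambda>a b. max (g a b) 0)"
    using edge_sum_edge_le[OF ij(1), of "\<lambda>a b. max (g a b) 0"] edge_weight_ge_1[OF ij(1)] ij(2-4)
    by (simp add: g_def)
  moreover have "edge_sum (\<lambda>a b. \<bar>g a b\<bar>) = edge_sum (\<lambda>a b. max (g a b) 0) + edge_sum (\<lambda>a b. max (- g a b) 0)"
    unfolding edge_sum_distrib[symmetric] by (rule edge_sum_cong) (simp add: max_def)
  moreover have "edge_sum (\<lambda>a b. (p a - p b)\<^sup>2) = 4"
    using edge_sum_diff_sq_eq_pairing norm by simp
  moreover have "edge_sum (\<lambda>a b. \<bar>g a b\<bar>) \<le> edge_sum (\<lambda>a b. (p a - p b)\<^sup>2)"
    using g_le by (intro edge_sum_mono)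
  ultimately have "edge_sum (\<lambda>a b. (p a - p b)\<^sup>2 - \<bar>g a b\<bar>) = 0"
    unfolding edge_sum_subtractf by linarith
  moreover have "0 \<le> (p c - p d)\<^sup>2 - \<bar>g c d\<bar>" for c d
    using g_le[of c d] by simp
  ultimately have "(p a - p b)\<^sup>2 - \<bar>g a b\<bar> = 0"
    by (rule edge_sum_nonneg_eq_0[OF _ ab(1)])
  then show ?thesis
    using ab(2) by (cases "a \<in> X"; cases "b \<in> X") (auto simp: g_def)
qed

end

locale obtuse_superbase_lattice_no_norm_one = obtuse_superbase_lattice +
  assumes norm_ne_one: "x \<in> L \<Longrightarrow> pairing r x x \<noteq> 1"
begin

lemma norm_2_jumps_at_one_level:
  assumes norm: "pairing r (lincomb n v p) (lincomb n v p) = 2"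
    and ij: "edge i j" "p i = p j + 1"
    and kl: "edge k l" "p k = p l + 1"
  shows "p k = p i"
proof (rule ccontr)
  \<comment> \<open>Otherwise the level cut through the jump at \<open>i j\<close> misses the one at \<open>k l\<close> and has norm 1.\<close>
  assume level: "p k \<noteq> p i"
  define S where "S = {a. p i \<le> p a}"
  have cross_le: "(of_bool (a \<in> S) - of_bool (b \<in> S))\<^sup>2 \<le> (p a - p b)\<^sup>2" for a b
    using level_jump_sq_le_abs[of "p i" "p a" "p b"] abs_le_square_int[of "p a - p b"] by (simp add: S_def)
  have "(k \<in> S) = (l \<in> S)"
    using kl(2) level by (auto simp: S_def)
  then have "2 \<le> edge_sum (\<lambda>a b. (p a - p b)\<^sup>2 - (of_bool (a \<in> S) - of_bool (b \<in> S))\<^sup>2)"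
    using edge_sum_edge_le[OF kl(1), of "\<lambda>a b. (p a - p b)\<^sup>2 - (of_bool (a \<in> S) - of_bool (b \<in> S))\<^sup>2"]
      cross_le edge_weight_ge_1[OF kl(1)] kl(2)
    by simp
  then have "pairing r (cut_vec S) (cut_vec S) \<le> 1"
    using norm by (simp add: edge_sum_subtractf edge_sum_diff_sq_eq_pairing cut_vec_def)
  moreover have "1 \<le> pairing r (cut_vec S) (cut_vec S)"
    using cut_norm_ge_1[OF ij(1)] ij(2) by (simp add: S_def)
  ultimately show False
    using norm_ne_one[OF cut_vec_mem] by simp
qed

text \<open>A shared jump forces shared jumps of both signs, all on one level of \<open>p\<close>; splitting \<open>X\<close>
  along that level then contradicts connectivity.\<close>

lemma orthogonal_norm_2_jumps_avoid_irreducible_cut: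
  assumes irr: "irreducible_vec r L (cut_vec X)"
    and norm: "pairing r (lincomb n v p) (lincomb n v p) = 2"
    and orth: "pairing r (cut_vec X) (lincomb n v p) = 0"
    and "edge a b"
  shows "(of_bool (a \<in> X) - of_bool (b \<in> X)) * (p a - p b) = 0"
proof (rule ccontr)
  define g where "g = (\<lambda>a b. (of_bool (a \<in> X) - of_bool (b \<in> X)) * (p a - p b))"
  assume "(of_bool (a \<in> X) - of_bool (b \<in> X)) * (p a - p b) \<noteq> 0"
  then have "g a b \<noteq> 0" "- g a b \<noteq> 0"
    by (simp_all add: g_def)
  have step: "\<bar>p c - p d\<bar> \<le> 1" if "edge c d" for c d
    using edge_diff_le_1_if_norm_2[OF norm that] .
  have "edge_sum g = 0"
    using edge_sum_diff_mult_eq_pairing[of "\<lambda>i. of_bool (i \<in> X)" p] orth by (simp add: g_def cut_vec_def)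
  then have "edge_sum (\<lambda>c d. - g c d) = 0"
    by (simp add: edge_sum_negf)
  have g_compl: "- g c d = (of_bool (c \<in> - X) - of_bool (d \<in> - X)) * (p c - p d)" for c d
    by (cases "c \<in> X"; cases "d \<in> X") (simp_all add: g_def)
  obtain i' j' where "edge i' j'" "0 < g i' j'"
    using edge_sum_zero_has_pos[OF \<open>edge_sum g = 0\<close> \<open>edge a b\<close> \<open>g a b \<noteq> 0\<close>] .
  then obtain i j where ij: "edge i j" "p i = p j + 1" "i \<in> X" "j \<notin> X"
    using oriented_crossing_edge[OF \<open>edge i' j'\<close> step[OF \<open>edge i' j'\<close>]] unfolding g_def by blast
  obtain k' l' where "edge k' l'" "0 < - g k' l'"
    using edge_sum_zero_has_pos[OF \<open>edge_sum (\<lambda>c d. - g c d) = 0\<close> \<open>edge a b\<close> \<open>- g a b \<noteq> 0\<close>] .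
  then obtain k l where kl: "edge k l" "p k = p l + 1" "k \<notin> X" "l \<in> X"
    using oriented_crossing_edge[OF \<open>edge k' l'\<close> step[OF \<open>edge k' l'\<close>], of "- X"]
    unfolding g_compl by blast
  have level: "p k = p i"
    using norm_2_jumps_at_one_level[OF norm ij(1,2) kl(1,2)] .
  define A where "A = X \<inter> {c. p i \<le> p c}"
  have "cut_vec A \<noteq> (\<lambda>j. 0)"
    using cut_vec_nonzero[OF ij(1)] ij(3,4) by (simp add: A_def)
  moreover have "cut_vec (X - A) \<noteq> (\<lambda>j. 0)"
    using cut_vec_nonzero[OF kl(1)] kl(2-4) level by (simp add: A_def)
  ultimately obtain c d where "c \<in> A" "d \<in> X - A" "edge c d"
    using irreducible_cut_connected[OF irr] A_def by blast
  then show False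
    using norm_2_jump_crosses_orthogonal_cut[OF norm orth ij(1,3,4,2), of c d] by (auto simp: A_def)
qed

lemma edge_diff_le_1_if_norm_4:
  assumes norm: "pairing r (lincomb n v s) (lincomb n v s) = 4" and ab: "edge a b"
  shows "\<bar>s a - s b\<bar> \<le> 1"
proof (rule ccontr)
  assume "\<not> \<bar>s a - s b\<bar> \<le> 1"
  moreover have "\<bar>s a - s b\<bar> \<le> 2"
    using edge_diff_sq_le_norm[OF ab, of s] norm abs_le_square_iff[of "s a - s b" 2] by simp
  ultimately have jump: "\<bar>s a - s b\<bar> = 2"
    by simp
  \<comment> \<open>The two level cuts through the jump have total norm at most 2, so one has norm 1.\<close>
  define t where "t = max (s a) (s b)"
  define S1 where "S1 = {x. t \<le> s x}"
  define S2 where "S2 = {x. t - 1 \<le> s x}"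
  have "(s a - s b)\<^sup>2 = 4"
    using jump power2_abs[of "s a - s b"] by simp
  then have "4 \<le> edge_sum (\<lambda>x y. (s x - s y)\<^sup>2 - \<bar>s x - s y\<bar>)"
    using edge_sum_edge_le[OF ab, of "\<lambda>x y. (s x - s y)\<^sup>2 - \<bar>s x - s y\<bar>"] edge_weight_ge_1[OF ab]
      abs_le_square_int jump by (simp add: power2_commute[of "s b"] abs_minus_commute[of "s b"])
  then have abs_sum: "edge_sum (\<lambda>x y. \<bar>s x - s y\<bar>) \<le> 4"
    using norm by (simp add: edge_sum_subtractf edge_sum_diff_sq_eq_pairing)
  have levels: "edge_sum (\<lambda>x y. (of_bool (x \<in> S1) - of_bool (y \<in> S1))\<^sup>2
      + (of_bool (x \<in> S2) - of_bool (y \<in> S2))\<^sup>2) \<le> edge_sum (\<lambda>x y. \<bar>s x - s y\<bar>)"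
    using two_level_jumps_sq_le_abs by (intro edge_sum_mono) (simp add: S1_def S2_def)
  have "s a = s b + 2 \<or> s b = s a + 2"
    using jump by arith
  then have "(a \<in> S1) \<noteq> (b \<in> S1)" "(a \<in> S2) \<noteq> (b \<in> S2)"
    by (auto simp: S1_def S2_def t_def)
  then have "1 \<le> pairing r (cut_vec S1) (cut_vec S1)" "1 \<le> pairing r (cut_vec S2) (cut_vec S2)"
    using cut_norm_ge_1[OF ab] by auto
  then have "pairing r (cut_vec S1) (cut_vec S1) = 1"
    using abs_sum levels by (simp add: edge_sum_distrib edge_sum_cut_sq_eq_pairing)
  then show False
    using norm_ne_one[OF cut_vec_mem] by simp
qed

lemma irreducible_orthogonal_roots:
  assumes irr: "irreducible_vec r L z"
    and mem: "x \<in> L" "y \<in> L" "w \<in> L"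
    and norms: "pairing r x x = 2" "pairing r y y = 2" "pairing r w w = 2"
    and xy: "pairing r x y = 0" and xw: "pairing r x w = 1" and yw: "pairing r y w = -1"
    and zx: "pairing r z x = 0" and zy: "pairing r z y = 0"
  shows "pairing r z w = 0"
proof -
  obtain X where z: "z = cut_vec X"
    using irreducible_is_cut[OF irr] .
  obtain a p b where x: "x = lincomb n v a" and y: "y = lincomb n v p" and w: "w = lincomb n v b"
    using superbase_spans mem by metis
  define Z :: "nat \<Rightarrow> nat \<Rightarrow> int" where "Z c d = of_bool (c \<in> X) - of_bool (d \<in> X)" for c d
  define A where "A c d = a c - a d" for c d
  define P where "P c d = p c - p d" for c d
  define B where "B c d = b c - b d" for c d
  have "pairing r (lincomb n v (\<lambda>i. a i + p i)) (lincomb n v (\<lambda>i. a i + p i)) = 4"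
    using norms(1,2) xy
    by (simp add: x y lincomb_add pairing_add_left pairing_add_right pairing_sym[of r "lincomb n v p" "lincomb n v a"])
  note sum_bound = edge_diff_le_1_if_norm_4[OF this]
  have "\<bar>Z c d * B c d\<bar> + \<bar>A c d * B c d\<bar> + \<bar>P c d * B c d\<bar> + A c d * P c d \<le> (B c d)\<^sup>2"
    if "edge c d" for c d
  proof (rule root_triple_edge_bound)
    show "\<bar>Z c d\<bar> \<le> 1"
      by (simp add: Z_def)
    show "\<bar>A c d\<bar> \<le> 1" "\<bar>P c d\<bar> \<le> 1" "\<bar>B c d\<bar> \<le> 1"
      using edge_diff_le_1_if_norm_2[OF _ that] norms unfolding A_def P_def B_def x y w by blast+
    show "\<bar>A c d + P c d\<bar> \<le> 1"
      using sum_bound[OF that] by (simp add: A_def P_def algebra_simps)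
    show "Z c d * A c d = 0" "Z c d * P c d = 0"
      using orthogonal_norm_2_jumps_avoid_irreducible_cut[OF irr[unfolded z] _ _ that] norms zx zy
      unfolding Z_def A_def P_def x y z by blast+
  qed
  then have "edge_sum (\<lambda>c d. \<bar>Z c d * B c d\<bar>) + edge_sum (\<lambda>c d. \<bar>A c d * B c d\<bar>)
      + edge_sum (\<lambda>c d. \<bar>P c d * B c d\<bar>) + edge_sum (\<lambda>c d. A c d * P c d) \<le> edge_sum (\<lambda>c d. (B c d)\<^sup>2)"
    unfolding edge_sum_distrib[symmetric] by (rule edge_sum_mono)
  moreover have "\<bar>edge_sum (\<lambda>c d. Z c d * B c d)\<bar> \<le> edge_sum (\<lambda>c d. \<bar>Z c d * B c d\<bar>)"
    "\<bar>edge_sum (\<lambda>c d. A c d * B c d)\<bar> \<le> edge_sum (\<lambda>c d. \<bar>A c d * B c d\<bar>)"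
    "\<bar>edge_sum (\<lambda>c d. P c d * B c d)\<bar> \<le> edge_sum (\<lambda>c d. \<bar>P c d * B c d\<bar>)"
    by (rule edge_sum_abs)+
  moreover have "edge_sum (\<lambda>c d. Z c d * B c d) = 2 * pairing r z w"
    "edge_sum (\<lambda>c d. A c d * B c d) = 2" "edge_sum (\<lambda>c d. P c d * B c d) = -2"
    "edge_sum (\<lambda>c d. A c d * P c d) = 0" "edge_sum (\<lambda>c d. (B c d)\<^sup>2) = 4"
    using xw yw xy norms(3)
    by (simp_all add: Z_def A_def P_def B_def x y w z cut_vec_def edge_sum_diff_mult_eq_pairing edge_sum_diff_sq_eq_pairing)
  ultimately show ?thesis
    by linarith
qed

end

lemma changemaker_pos:
  assumes cm: "changemaker r \<sigma>"
  shows "1 \<le> i \<Longrightarrow> i \<le> r \<Longrightarrow> 0 < \<sigma> i"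
proof (induction i rule: nat_induct_at_least)
  case base
  then show ?case
    using cm by (simp add: changemaker_def)
next
  case (Suc i)
  then have "\<sigma> i \<le> \<sigma> (Suc i)"
    using cm unfolding changemaker_def by (metis Suc_1 Suc_le_mono diff_Suc_1)
  then show ?case
    using Suc by simp
qed

lemma orth_lattice_lincomb:
  assumes "\<And>i. i \<le> n \<Longrightarrow> v i \<in> orth_lattice r \<sigma>"
  shows "lincomb n v c \<in> orth_lattice r \<sigma>"
proof -
  have "lincomb n v c \<in> zvec r"
    using assms unfolding orth_lattice_def zvec_def lincomb_def by auto
  moreover have "pairing r \<sigma> (lincomb n v c) = (\<Sum>i\<le>n. c i * pairing r \<sigma> (v i))"
    unfolding lincomb_def pairing_sum_right
    by (simp add: pairing_def sum_distrib_left algebra_simps)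
  then have "pairing r (lincomb n v c) \<sigma> = 0"
    using assms by (simp add: orth_lattice_def pairing_sym)
  ultimately show ?thesis
    unfolding orth_lattice_def by simp
qed

lemma orth_lattice_no_norm_one:
  assumes nonzero: "\<And>i. i \<in> {1..r} \<Longrightarrow> \<sigma> i \<noteq> 0" and x: "x \<in> orth_lattice r \<sigma>"
  shows "pairing r x x \<noteq> 1"
proof
  assume norm: "pairing r x x = 1"
  then obtain i where i: "i \<in> {1..r}" "x i \<noteq> 0"
    unfolding pairing_def by (metis (no_types, lifting) mult_zero_left sum.neutral zero_neq_one)
  have "1 \<le> x i * x i"
    using abs_le_square_int[of "x i"] i(2) by (simp add: power2_eq_square)
  moreover have "x i * x i + (\<Sum>j\<in>{1..r} - {i}. x j * x j) = 1"
    using norm i(1) by (simp add: pairing_def sum.remove)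
  moreover have "0 \<le> (\<Sum>j\<in>{1..r} - {i}. x j * x j)"
    by (intro sum_nonneg) simp
  ultimately have "(\<Sum>j\<in>{1..r} - {i}. x j * x j) = 0"
    by linarith
  then have "\<forall>j\<in>{1..r} - {i}. x j = 0"
    by (subst (asm) sum_nonneg_eq_0_iff) auto
  then have "pairing r x \<sigma> = x i * \<sigma> i"
    using i(1) by (simp add: pairing_def sum.remove)
  then show False
    using x i nonzero[OF i(1)] by (simp add: orth_lattice_def)
qed

definition basis_diff :: "nat \<Rightarrow> nat \<Rightarrow> nat \<Rightarrow> int" where
  "basis_diff i j = (\<lambda>l. of_bool (l = i) - of_bool (l = j))"

lemma basis_diff_apply: "basis_diff i j l = of_bool (l = i) - of_bool (l = j)"
  by (simp add: basis_diff_def)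

lemma pairing_basis_diff:
  assumes "i \<in> {1..r}" "j \<in> {1..r}"
  shows "pairing r x (basis_diff i j) = x i - x j"
  using assms by (simp add: pairing_def basis_diff_def right_diff_distrib sum_subtractf)

lemma basis_diff_mem:
  assumes "i \<in> {1..r}" "j \<in> {1..r}" "\<sigma> i = \<sigma> j"
  shows "basis_diff i j \<in> orth_lattice r \<sigma>"
  using assms pairing_basis_diff[OF assms(1,2), of \<sigma>]
  by (auto simp: orth_lattice_def zvec_def basis_diff_def pairing_sym)

lemma orth_lattice_superbase_no_norm_one:
  assumes "changemaker r \<sigma>" and v: "obtuse_superbase r (orth_lattice r \<sigma>) n v"
  shows "obtuse_superbase_lattice_no_norm_one r (orth_lattice r \<sigma>) n v"
proof
  show "lincomb n v c \<in> orth_lattice r \<sigma>" for c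
    using v by (intro orth_lattice_lincomb) (simp add: obtuse_superbase_def)
  have "\<sigma> i \<noteq> 0" if "i \<in> {1..r}" for i
    using changemaker_pos[OF assms(1)] that by fastforce
  then show "x \<in> orth_lattice r \<sigma> \<Longrightarrow> pairing r x x \<noteq> 1" for x
    by (rule orth_lattice_no_norm_one)
qed (fact v)

theorem proposition4p8:
  fixes r k :: nat and \<sigma> z :: "nat \<Rightarrow> int"
  assumes "changemaker r \<sigma>"
    and "\<sigma> r \<ge> 2"
    and "\<exists>v. obtuse_superbase r (orth_lattice r \<sigma>) (r - 1) v"
    and "1 \<le> k" and "k + 3 \<le> r"
    and "\<sigma> k = \<sigma> (k+1)" and "\<sigma> (k+1) = \<sigma> (k+2)" and "\<sigma> (k+2) = \<sigma> (k+3)"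
    and "irreducible_vec r (orth_lattice r \<sigma>) z"
    and "z k = z (k+1)" and "z (k+2) = z (k+3)"
  shows "z (k+2) = z (k+1)"
proof -
  obtain v where v: "obtuse_superbase r (orth_lattice r \<sigma>) (r - 1) v"
    using assms(3) by blast
  interpret obtuse_superbase_lattice_no_norm_one r "orth_lattice r \<sigma>" "r - 1" v
    using orth_lattice_superbase_no_norm_one[OF assms(1) v] .
  have idx: "k \<in> {1..r}" "k + 1 \<in> {1..r}" "k + 2 \<in> {1..r}" "k + 3 \<in> {1..r}"
    using assms(4,5) by auto
  have pairing_at: "pairing r x (basis_diff i j) = x i - x j"
    if "i \<in> {k, k + 1, k + 2, k + 3}" "j \<in> {k, k + 1, k + 2, k + 3}" for x i j
    using that idx by (intro pairing_basis_diff) auto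
  have "pairing r z (basis_diff (k + 2) k) = 0"
  proof (rule irreducible_orthogonal_roots[OF assms(9)])
    show "basis_diff (k + 1) k \<in> orth_lattice r \<sigma>" "basis_diff (k + 3) (k + 2) \<in> orth_lattice r \<sigma>"
      "basis_diff (k + 2) k \<in> orth_lattice r \<sigma>"
      using idx assms(6-8) by (simp_all add: basis_diff_mem)
  qed (simp_all add: pairing_at basis_diff_apply assms(10) assms(11)[symmetric])
  then show ?thesis
    using assms(10) by (simp add: pairing_at)
qed

end
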